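(* Let $S_{\mathbf{A}}$ be a finite set of generalized side informations $\mathbf{A}\in\mathcal{C}(\mathbf{X})$. For every $\epsilon>0$, $R_{lb}(\mathbf{D}+\epsilon\mathbf{1})\ge R'_{lb}(\mathbf{D}+\epsilon\mathbf{1})$, where $R'_{lb}(\mathbf{D}+\epsilon\mathbf{1})$ is the infimum of $K(\emptyset)-\epsilon$ over all $K:S_{\mathbf{A}}\to[0,\infty)$ satisfying, for all elements of $S_{\mathbf{A}}$ involved: (initialize) $K(\mathbf{X})=0$; (non-negativity) $K(\mathbf{A})\ge0$; (monotonicity) $K((\mathbf{A},\mathbf{C}))\ge K((\mathbf{B},\mathbf{C}))$ whenever $(\mathbf{B}\succeq\mathbf{A}|\mathbf{C})$; (monotonicity+) $K(\mathbf{A})\ge K(\mathbf{B})+R(\mathbf{D_A}+\epsilon\mathbf{1})$ whenever $\mathbf{A}\leftrightarrow\mathbf{B}\leftrightarrow\mathbf{X}$; (submodularity) $K(\mathbf{A})+K(\mathbf{B})\ge K(\mathbf{C})+K((\mathbf{A},\mathbf{B}))$ for all couplings with $\mathbf{B}\leftrightarrow\mathbf{C}\leftrightarrow\mathbf{A}$ and $\mathbf{C}=f_1(\mathbf{A})$ or $\mathbf{C}=f_2(\mathbf{B})$ for deterministic $f_1,f_2$. Here, for a pair with $\mathbf{A}\leftrightarrow\mathbf{B}\leftrightarrow\mathbf{X}$, $\mathbf{D_A}=\{\mathbf{D_i}:\mathbf{Y_i}\leftrightarrow\mathbf{A}\leftrightarrow\mathbf{X}\}$ and $R(\mathbf{D_A}+\epsilon\mathbf{1})=\min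 I(\mathbf{B};\mathbf{V}|\mathbf{A})$, the minimum over random vectors $\mathbf{V}$ jointly distributed with $(\mathbf{X},\mathbf{A},\mathbf{B},\mathbf{Y_1},\dots,\mathbf{Y_m})$ with $\mathbf{V}\leftrightarrow\mathbf{X}\leftrightarrow(\mathbf{A},\mathbf{B},\mathbf{Y_1},\dots,\mathbf{Y_m})$ for which there exist functions $g_i$ with $E[d_i(\mathbf{X},g_i(\mathbf{V},\mathbf{Y_i}))]\le\mathbf{D_i}+\epsilon\mathbf{1}$ for every $i$ with $\mathbf{D_i}\in\mathbf{D_A}$.
   Context: Setting as for the LP lower bound: source $\mathbf{X}$, side informations $\mathbf{Y_i}$, distortion measures $d_i$ and constraints $\mathbf{D_i}$. $\mathcal{C}(\mathbf{X})$ is the set of random vectors coupled to $\mathbf{X}$ (joint distributions whose first component has the law of $\mathbf{X}$), called generalized side information. $(\mathbf{B}\succeq\mathbf{A}|\mathbf{C})$ means $I(\mathbf{W};\mathbf{B}|\mathbf{C})\ge I(\mathbf{W};\mathbf{A}|\mathbf{C})$ for all $\mathbf{W}$ with $\mathbf{W}\leftrightarrow(\mathbf{X},\mathbf{C})\leftrightarrow(\mathbf{A},\mathbf{B})$. $K(\emptyset)$ denotes the common value of $K$ at deterministic random vectors. $R_{lb}(\mathbf{D}+\epsilon\mathbf{1})=\inf_{\mathbf{V}\in\mathcal{C}(\mathbf{X})}\inf_{\mathbf{U}_\cdot}R^{LP}_{lb}(\epsilon)$, where $\mathbf{U}_\cdot$ assigns to each $\mathbf{A}\in\mathcal{C}(\mathbf{X})$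 a random vector $\mathbf{U_A}$ jointly distributed with $(\mathbf{X},\mathbf{V})$ such that: (1) $\mathbf{U_B}$ is independent of $\mathbf{X}$; (2) if $\mathbf{X}\leftrightarrow\mathbf{B}\leftrightarrow(A_1,\dots,A_s)$ is possible then $\mathbf{U_B},(U_{A_1},\dots,U_{A_s})$ can be coupled with $(\mathbf{X},\mathbf{V})$ so that $\mathbf{X}\leftrightarrow(\mathbf{V},\mathbf{U_B})\leftrightarrow(U_{A_1},\dots,U_{A_s})$; (3) there are $g_i$ with $E[d_i(\mathbf{X},g_i(\mathbf{V},\mathbf{U_{Y_i}},\mathbf{Y_i}))]\le\mathbf{D_i}+\epsilon\mathbf{1}$. $R^{LP}_{lb}(\epsilon)$ is the infimum of $K(\emptyset)-\epsilon$ over $K:\mathcal{C}(\mathbf{X})\to[0,\infty)$ (constant on deterministic vectors) with: $K(\mathbf{X})=0$; $K(\mathbf{A})\ge0$; $K(\mathbf{B})+I(\mathbf{B};\mathbf{V},\mathbf{U_B}|\mathbf{A})\ge K(\mathbf{A})$ when $\mathbf{A}\leftrightarrow\mathbf{B}\leftrightarrow\mathbf{X}$; $K((\mathbf{A},\mathbf{C}))\ge K((\mathbf{B},\mathbf{C}))$ when $(\mathbf{B}\succeq\mathbf{A}|\mathbf{C})$; $K(\mathbf{A})\ge K(\mathbf{B})+I(\mathbf{B};\mathbf{V},\mathbf{U_A}|\mathbf{A})$ when $\mathbf{A}\leftrightarrow\mathbf{B}\leftrightarrow\mathbf{X}$; $K(\mathbf{A})+K(\mathbf{B})\ge K(\mathbf{C})+K((\mathbf{A},\mathbf{B}))$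 when $\mathbf{B}\leftrightarrow\mathbf{C}\leftrightarrow\mathbf{A}$ and $\mathbf{C}=f_1(\mathbf{A})$ or $\mathbf{C}=f_2(\mathbf{B})$; with $(\mathbf{U_A},\mathbf{V})\leftrightarrow\mathbf{X}\leftrightarrow(\mathbf{A},\mathbf{B})$ whenever these appear together. *)

theory Defs
  imports "HOL-Probability.Probability_Mass_Function" "HOL-Library.Countable"
          "HOL-Library.Nat_Bijection" "HOL-Library.Extended_Real"
begin

text \<open>Random variables are functions on the sample space of a pmf with finite support.\<close>

definition prb :: "'w pmf \<Rightarrow> ('w \<Rightarrow> bool) \<Rightarrow> real" where
  "prb \<omega> E = measure_pmf.prob \<omega> {w. E w}"

definition markov :: "'w pmf \<Rightarrow> ('w \<Rightarrow> 'a) \<Rightarrow> ('w \<Rightarrow> 'b) \<Rightarrow> ('w \<Rightarrow> 'c) \<Rightarrow> bool" where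
  "markov \<omega> A B C \<longleftrightarrow>
     (\<forall>a b c. prb \<omega> (\<lambda>w. A w = a \<and> B w = b \<and> C w = c) * prb \<omega> (\<lambda>w. B w = b)
            = prb \<omega> (\<lambda>w. A w = a \<and> B w = b) * prb \<omega> (\<lambda>w. B w = b \<and> C w = c))"

definition indep_rv :: "'w pmf \<Rightarrow> ('w \<Rightarrow> 'a) \<Rightarrow> ('w \<Rightarrow> 'b) \<Rightarrow> bool" where
  "indep_rv \<omega> A B \<longleftrightarrow>
     (\<forall>a b. prb \<omega> (\<lambda>w. A w = a \<and> B w = b) = prb \<omega> (\<lambda>w. A w = a) * prb \<omega> (\<lambda>w. B w = b))"

definition ent :: "'w pmf \<Rightarrow> ('w \<Rightarrow> 'a) \<Rightarrow> real" where
  "ent \<omega> F = (\<Sum>v\<in>set_pmf (map_pmf F \<omega>). - pmf (map_pmf F \<omega>) v * log 2 (pmf (map_pmf F \<omega>) v))"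

definition cmi :: "'w pmf \<Rightarrow> ('w \<Rightarrow> 'a) \<Rightarrow> ('w \<Rightarrow> 'b) \<Rightarrow> ('w \<Rightarrow> 'c) \<Rightarrow> real" where
  "cmi \<omega> A B C = ent \<omega> (\<lambda>w. (A w, C w)) + ent \<omega> (\<lambda>w. (B w, C w))
                 - ent \<omega> (\<lambda>w. (A w, B w, C w)) - ent \<omega> C"

text \<open>An element of C(X) is the joint law of (X, A), with A taking values in nat
  (a universal countable alphabet; finite support).\<close>
type_synonym 'x gsi = "('x \<times> nat) pmf"

definition inC :: "'x pmf \<Rightarrow> 'x gsi \<Rightarrow> bool" where
  "inC pX P \<longleftrightarrow> map_pmf fst P = pX \<and> finite (set_pmf P)"

definition det_gsi :: "'x pmf \<Rightarrow> 'x gsi \<Rightarrow> bool" where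
  "det_gsi pX P \<longleftrightarrow> (\<exists>c. P = map_pmf (\<lambda>x. (x, c)) pX)"

text \<open>The representative deterministic vector (written \<emptyset> in the paper).\<close>
definition empty_gsi :: "'x pmf \<Rightarrow> 'x gsi" where
  "empty_gsi pX = map_pmf (\<lambda>x. (x, 0)) pX"

definition X_gsi :: "'x::countable pmf \<Rightarrow> 'x gsi" where
  "X_gsi pX = map_pmf (\<lambda>x. (x, to_nat x)) pX"

definition law :: "'w pmf \<Rightarrow> ('w \<Rightarrow> 'x) \<Rightarrow> ('w \<Rightarrow> nat) \<Rightarrow> 'x gsi" where
  "law \<omega> Xv Av = map_pmf (\<lambda>w. (Xv w, Av w)) \<omega>"

definition pairv :: "('w \<Rightarrow> nat) \<Rightarrow> ('w \<Rightarrow> nat) \<Rightarrow> 'w \<Rightarrow> nat" where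
  "pairv A C = (\<lambda>w. prod_encode (A w, C w))"

definition cpl :: "'x pmf \<Rightarrow> nat pmf \<Rightarrow> (nat \<Rightarrow> 'x) \<Rightarrow> bool" where
  "cpl pX \<omega> Xv \<longleftrightarrow> finite (set_pmf \<omega>) \<and> map_pmf Xv \<omega> = pX"

definition ysv :: "nat \<Rightarrow> (nat \<Rightarrow> 'w \<Rightarrow> nat) \<Rightarrow> 'w \<Rightarrow> nat list" where
  "ysv m Yv = (\<lambda>w. map (\<lambda>i. Yv i w) [0..<m])"

definition succeq :: "nat pmf \<Rightarrow> (nat \<Rightarrow> 'x) \<Rightarrow> (nat \<Rightarrow> nat) \<Rightarrow> (nat \<Rightarrow> nat) \<Rightarrow> (nat \<Rightarrow> nat) \<Rightarrow> bool" where
  "succeq \<omega> Xv Bv Av Cv \<longleftrightarrow>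
     (\<forall>(\<omega>'::nat pmf) Xv' Av' Bv' Cv' (Wv::nat \<Rightarrow> nat).
        finite (set_pmf \<omega>') \<and>
        map_pmf (\<lambda>w. (Xv' w, Av' w, Bv' w, Cv' w)) \<omega>' = map_pmf (\<lambda>w. (Xv w, Av w, Bv w, Cv w)) \<omega> \<and>
        markov \<omega>' Wv (\<lambda>w. (Xv' w, Cv' w)) (\<lambda>w. (Av' w, Bv' w))
        \<longrightarrow> cmi \<omega>' Wv Bv' Cv' \<ge> cmi \<omega>' Wv Av' Cv')"

text \<open>The source and side informations are given jointly as random variables X0, Y0 i (i < m)
  on a finitely supported sample space \<omega>0.  The distortion d i is vector valued with
  components d i j, j < nc i, and constraint vector D i.\<close>

definition srcX :: "nat pmf \<Rightarrow> (nat \<Rightarrow> 'x) \<Rightarrow> 'x pmf" where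
  "srcX \<omega>0 X0 = map_pmf X0 \<omega>0"

definition Yg :: "nat pmf \<Rightarrow> (nat \<Rightarrow> 'x) \<Rightarrow> (nat \<Rightarrow> nat \<Rightarrow> nat) \<Rightarrow> nat \<Rightarrow> 'x gsi" where
  "Yg \<omega>0 X0 Y0 i = law \<omega>0 X0 (Y0 i)"

definition dist_ok :: "nat pmf \<Rightarrow> (nat \<Rightarrow> 'x) \<Rightarrow> (nat \<Rightarrow> 'r) \<Rightarrow> (nat \<Rightarrow> 'x \<Rightarrow> 'r \<Rightarrow> real)
                        \<Rightarrow> nat \<Rightarrow> (nat \<Rightarrow> real) \<Rightarrow> real \<Rightarrow> bool" where
  "dist_ok \<omega> Xv Zv di k Di \<epsilon> \<longleftrightarrow>
     (\<forall>j<k. measure_pmf.expectation \<omega> (\<lambda>w. di j (Xv w) (Zv w)) \<le> Di j + \<epsilon>)"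

text \<open>U maps A \<in> C(X) to the joint law of (X, V, U_A).\<close>
definition U_ok :: "nat pmf \<Rightarrow> (nat \<Rightarrow> 'x) \<Rightarrow> (nat \<Rightarrow> nat \<Rightarrow> nat) \<Rightarrow> nat
     \<Rightarrow> (nat \<Rightarrow> nat \<Rightarrow> 'x \<Rightarrow> 'r \<Rightarrow> real) \<Rightarrow> (nat \<Rightarrow> nat) \<Rightarrow> (nat \<Rightarrow> nat \<Rightarrow> real) \<Rightarrow> real
     \<Rightarrow> 'x gsi \<Rightarrow> ('x gsi \<Rightarrow> ('x \<times> nat \<times> nat) pmf) \<Rightarrow> bool" where
  "U_ok \<omega>0 X0 Y0 m d nc D \<epsilon> Vg U \<longleftrightarrow>
     (\<forall>A. inC (srcX \<omega>0 X0) A \<longrightarrow>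
         map_pmf (\<lambda>(x, v, u). (x, v)) (U A) = Vg \<and> finite (set_pmf (U A))) \<and>
     (\<forall>A. inC (srcX \<omega>0 X0) A \<longrightarrow> indep_rv (U A) fst (\<lambda>(x, v, u). u)) \<and>
     (\<forall>B As. inC (srcX \<omega>0 X0) B \<and> list_all (inC (srcX \<omega>0 X0)) As \<and>
        (\<exists>(\<omega>::nat pmf) Xv Bv (Av::nat \<Rightarrow> nat \<Rightarrow> nat). cpl (srcX \<omega>0 X0) \<omega> Xv \<and> law \<omega> Xv Bv = B \<and>
            (\<forall>j<length As. law \<omega> Xv (Av j) = As ! j) \<and>
            markov \<omega> Xv Bv (\<lambda>w. map (\<lambda>j. Av j w) [0..<length As]))
      \<longrightarrow> (\<exists>(\<omega>::nat pmf) Xv (Vv::nat \<Rightarrow> nat) (Ub::nat \<Rightarrow> nat) (Ua::nat \<Rightarrow> nat \<Rightarrow> nat).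
            finite (set_pmf \<omega>) \<and>
            map_pmf (\<lambda>w. (Xv w, Vv w, Ub w)) \<omega> = U B \<and>
            (\<forall>j<length As. map_pmf (\<lambda>w. (Xv w, Vv w, Ua j w)) \<omega> = U (As ! j)) \<and>
            markov \<omega> Xv (\<lambda>w. (Vv w, Ub w)) (\<lambda>w. map (\<lambda>j. Ua j w) [0..<length As]))) \<and>
     (\<forall>i<m. \<exists>(g::nat \<Rightarrow> nat \<Rightarrow> nat \<Rightarrow> 'r) (\<omega>::nat pmf) Xv (Vv::nat \<Rightarrow> nat) (Uv::nat \<Rightarrow> nat) Yv.
          finite (set_pmf \<omega>) \<and>
          map_pmf (\<lambda>w. (Xv w, Vv w, Uv w)) \<omega> = U (Yg \<omega>0 X0 Y0 i) \<and>
          law \<omega> Xv Yv = Yg \<omega>0 X0 Y0 i \<and>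
          markov \<omega> (\<lambda>w. (Vv w, Uv w)) Xv Yv \<and>
          dist_ok \<omega> Xv (\<lambda>w. g (Vv w) (Uv w) (Yv w)) (d i) (nc i) (D i) \<epsilon>)"

definition LP_feasible :: "'x::countable pmf \<Rightarrow> ('x gsi \<Rightarrow> ('x \<times> nat \<times> nat) pmf)
                           \<Rightarrow> ('x gsi \<Rightarrow> real) \<Rightarrow> bool" where
  "LP_feasible pX U K \<longleftrightarrow>
     (\<forall>P Q. inC pX P \<and> inC pX Q \<and> det_gsi pX P \<and> det_gsi pX Q \<longrightarrow> K P = K Q) \<and>
     K (X_gsi pX) = 0 \<and>
     (\<forall>A. inC pX A \<longrightarrow> K A \<ge> 0) \<and>
     (\<forall>\<omega> Xv Av Bv (Vv::nat \<Rightarrow> nat) (Uv::nat \<Rightarrow> nat).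
        cpl pX \<omega> Xv \<and> map_pmf (\<lambda>w. (Xv w, Vv w, Uv w)) \<omega> = U (law \<omega> Xv Bv) \<and>
        markov \<omega> Av Bv Xv \<and> markov \<omega> (\<lambda>w. (Uv w, Vv w)) Xv (\<lambda>w. (Av w, Bv w))
        \<longrightarrow> K (law \<omega> Xv Bv) + cmi \<omega> Bv (\<lambda>w. (Vv w, Uv w)) Av \<ge> K (law \<omega> Xv Av)) \<and>
     (\<forall>\<omega> Xv Av Bv Cv. cpl pX \<omega> Xv \<and> succeq \<omega> Xv Bv Av Cv
        \<longrightarrow> K (law \<omega> Xv (pairv Av Cv)) \<ge> K (law \<omega> Xv (pairv Bv Cv))) \<and>
     (\<forall>\<omega> Xv Av Bv (Vv::nat \<Rightarrow> nat) (Uv::nat \<Rightarrow> nat).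
        cpl pX \<omega> Xv \<and> map_pmf (\<lambda>w. (Xv w, Vv w, Uv w)) \<omega> = U (law \<omega> Xv Av) \<and>
        markov \<omega> Av Bv Xv \<and> markov \<omega> (\<lambda>w. (Uv w, Vv w)) Xv (\<lambda>w. (Av w, Bv w))
        \<longrightarrow> K (law \<omega> Xv Av) \<ge> K (law \<omega> Xv Bv) + cmi \<omega> Bv (\<lambda>w. (Vv w, Uv w)) Av) \<and>
     (\<forall>\<omega> Xv Av Bv Cv. cpl pX \<omega> Xv \<and> markov \<omega> Bv Cv Av \<and>
        ((\<exists>f1. \<forall>w\<in>set_pmf \<omega>. Cv w = f1 (Av w)) \<or> (\<exists>f2. \<forall>w\<in>set_pmf \<omega>. Cv w = f2 (Bv w)))
        \<longrightarrow> K (law \<omega> Xv Av) + K (law \<omega> Xv Bv) \<ge> K (law \<omega> Xv Cv) + K (law \<omega> Xv (pairv Av Bv)))"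

definition R_LP :: "'x::countable pmf \<Rightarrow> real \<Rightarrow> ('x gsi \<Rightarrow> ('x \<times> nat \<times> nat) pmf) \<Rightarrow> ereal" where
  "R_LP pX \<epsilon> U = Inf {ereal (K (empty_gsi pX) - \<epsilon>) | K. LP_feasible pX U K}"

definition R_lb :: "nat pmf \<Rightarrow> (nat \<Rightarrow> 'x::countable) \<Rightarrow> (nat \<Rightarrow> nat \<Rightarrow> nat) \<Rightarrow> nat
     \<Rightarrow> (nat \<Rightarrow> nat \<Rightarrow> 'x \<Rightarrow> 'r \<Rightarrow> real) \<Rightarrow> (nat \<Rightarrow> nat) \<Rightarrow> (nat \<Rightarrow> nat \<Rightarrow> real) \<Rightarrow> real \<Rightarrow> ereal" where
  "R_lb \<omega>0 X0 Y0 m d nc D \<epsilon> =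
     Inf {Inf {R_LP (srcX \<omega>0 X0) \<epsilon> U | U. U_ok \<omega>0 X0 Y0 m d nc D \<epsilon> Vg U}
          | Vg. inC (srcX \<omega>0 X0) Vg}"

definition Rrate :: "nat \<Rightarrow> (nat \<Rightarrow> nat \<Rightarrow> 'x \<Rightarrow> 'r \<Rightarrow> real) \<Rightarrow> (nat \<Rightarrow> nat) \<Rightarrow> (nat \<Rightarrow> nat \<Rightarrow> real)
     \<Rightarrow> real \<Rightarrow> nat pmf \<Rightarrow> (nat \<Rightarrow> 'x) \<Rightarrow> (nat \<Rightarrow> nat) \<Rightarrow> (nat \<Rightarrow> nat) \<Rightarrow> (nat \<Rightarrow> nat \<Rightarrow> nat) \<Rightarrow> ereal" where
  "Rrate m d nc D \<epsilon> \<omega> Xv Av Bv Yv =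
     Inf {ereal (cmi \<omega>' Bv' Vv' Av') | (\<omega>'::nat pmf) Xv' Av' Bv' Yv' (Vv'::nat \<Rightarrow> nat).
            finite (set_pmf \<omega>') \<and>
            map_pmf (\<lambda>w. (Xv' w, Av' w, Bv' w, ysv m Yv' w)) \<omega>'
              = map_pmf (\<lambda>w. (Xv w, Av w, Bv w, ysv m Yv w)) \<omega> \<and>
            markov \<omega>' Vv' Xv' (\<lambda>w. (Av' w, Bv' w, ysv m Yv' w)) \<and>
            (\<forall>i<m. markov \<omega> (Yv i) Av Xv \<longrightarrow>
               (\<exists>g::nat \<Rightarrow> nat \<Rightarrow> 'r. dist_ok \<omega>' Xv' (\<lambda>w. g (Vv' w) (Yv' i w)) (d i) (nc i) (D i) \<epsilon>))}"

definition Rp_feasible :: "nat pmf \<Rightarrow> (nat \<Rightarrow> 'x::countable) \<Rightarrow> (nat \<Rightarrow> nat \<Rightarrow> nat) \<Rightarrow> nat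
     \<Rightarrow> (nat \<Rightarrow> nat \<Rightarrow> 'x \<Rightarrow> 'r \<Rightarrow> real) \<Rightarrow> (nat \<Rightarrow> nat) \<Rightarrow> (nat \<Rightarrow> nat \<Rightarrow> real) \<Rightarrow> real
     \<Rightarrow> 'x gsi set \<Rightarrow> ('x gsi \<Rightarrow> real) \<Rightarrow> bool" where
  "Rp_feasible \<omega>0 X0 Y0 m d nc D \<epsilon> S K \<longleftrightarrow>
     (let pX = srcX \<omega>0 X0 in
     (\<forall>P\<in>S. \<forall>Q\<in>S. det_gsi pX P \<and> det_gsi pX Q \<longrightarrow> K P = K Q) \<and>
     (X_gsi pX \<in> S \<longrightarrow> K (X_gsi pX) = 0) \<and>
     (\<forall>A\<in>S. K A \<ge> 0) \<and>
     (\<forall>\<omega> Xv Av Bv Cv. cpl pX \<omega> Xv \<and> law \<omega> Xv (pairv Av Cv) \<in> S \<and> law \<omega> Xv (pairv Bv Cv) \<in> S \<and>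
        succeq \<omega> Xv Bv Av Cv
        \<longrightarrow> K (law \<omega> Xv (pairv Av Cv)) \<ge> K (law \<omega> Xv (pairv Bv Cv))) \<and>
     (\<forall>\<omega> Xv Av Bv Yv. cpl pX \<omega> Xv \<and> law \<omega> Xv Av \<in> S \<and> law \<omega> Xv Bv \<in> S \<and>
        map_pmf (\<lambda>w. (Xv w, ysv m Yv w)) \<omega> = map_pmf (\<lambda>w. (X0 w, ysv m Y0 w)) \<omega>0 \<and>
        markov \<omega> Av Bv Xv
        \<longrightarrow> ereal (K (law \<omega> Xv Av)) \<ge> ereal (K (law \<omega> Xv Bv)) + Rrate m d nc D \<epsilon> \<omega> Xv Av Bv Yv) \<and>
     (\<forall>\<omega> Xv Av Bv Cv. cpl pX \<omega> Xv \<and> law \<omega> Xv Av \<in> S \<and> law \<omega> Xv Bv \<in> S \<and> law \<omega> Xv Cv \<in> S \<and>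
        law \<omega> Xv (pairv Av Bv) \<in> S \<and> markov \<omega> Bv Cv Av \<and>
        ((\<exists>f1. \<forall>w\<in>set_pmf \<omega>. Cv w = f1 (Av w)) \<or> (\<exists>f2. \<forall>w\<in>set_pmf \<omega>. Cv w = f2 (Bv w)))
        \<longrightarrow> K (law \<omega> Xv Av) + K (law \<omega> Xv Bv) \<ge> K (law \<omega> Xv Cv) + K (law \<omega> Xv (pairv Av Bv))))"

definition Rp_lb :: "nat pmf \<Rightarrow> (nat \<Rightarrow> 'x::countable) \<Rightarrow> (nat \<Rightarrow> nat \<Rightarrow> nat) \<Rightarrow> nat
     \<Rightarrow> (nat \<Rightarrow> nat \<Rightarrow> 'x \<Rightarrow> 'r \<Rightarrow> real) \<Rightarrow> (nat \<Rightarrow> nat) \<Rightarrow> (nat \<Rightarrow> nat \<Rightarrow> real) \<Rightarrow> real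
     \<Rightarrow> 'x gsi set \<Rightarrow> ereal" where
  "Rp_lb \<omega>0 X0 Y0 m d nc D \<epsilon> S =
     Inf {ereal (K (empty_gsi (srcX \<omega>0 X0)) - \<epsilon>) | K. Rp_feasible \<omega>0 X0 Y0 m d nc D \<epsilon> S K}"

end

theory Submission
  imports Defs "HOL-Probability.Product_PMF"
begin

text \<open>An LP-feasible triple (V, U, K) yields an R'-feasible K by restriction to S_A: every
  constraint of R' except monotonicity+ is an instance of an LP constraint.  For monotonicity+,
  let A -- B -- X.  Glue a copy of (X, V, U_A), distributed as U(A), to the given coupling along X,
  and for every Y_i with Y_i -- A -- X append U_{Y_i}, drawn from its conditional law given
  (V, U_A); this law is supplied by the coupling property (2) of U.  The decoders of property (3)
  then meet the distortion constraints with V' = (V, U_A, U_{Y_1}, ..., U_{Y_m}), and since the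
  appended part depends on (A, B) only through (V, U_A), the LP constraint gives
  R(D_A + \<epsilon>1) \<le> I(B; V' | A) = I(B; V, U_A | A) \<le> K(A) - K(B).\<close>

section \<open>Kernels\<close>

definition joint_pmf :: "'a pmf \<Rightarrow> ('a \<Rightarrow> 'b pmf) \<Rightarrow> ('a \<times> 'b) pmf" where
  "joint_pmf P K = bind_pmf P (\<lambda>a. map_pmf (Pair a) (K a))"

lemma pmf_joint_pmf: "pmf (joint_pmf P K) (a, b) = pmf P a * pmf (K a) b"
proof -
  have "pmf (map_pmf (Pair a') (K a')) (a, b) = pmf (K a) b * indicator {a} a'" for a'
    by (cases "a' = a") (auto simp: pmf_map_inj' inj_on_def pmf_eq_0_set_pmf)
  then show ?thesis
    unfolding joint_pmf_def pmf_bind by (simp add: measure_pmf_single)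
qed

lemma set_pmf_joint_pmf: "set_pmf (joint_pmf P K) = (SIGMA a:set_pmf P. set_pmf (K a))"
  by (auto simp: joint_pmf_def)

lemma finite_set_pmf_joint_pmf:
  "finite (set_pmf P) \<Longrightarrow> (\<And>a. finite (set_pmf (K a))) \<Longrightarrow> finite (set_pmf (joint_pmf P K))"
  by (simp add: set_pmf_joint_pmf)

lemma map_fst_joint_pmf [simp]: "map_pmf fst (joint_pmf P K) = P"
  by (simp add: joint_pmf_def map_bind_pmf map_pmf_comp flip: map_pmf_def)

lemma map_pmf_fst_joint_pmf [simp]: "map_pmf (\<lambda>z. F (fst z)) (joint_pmf P K) = map_pmf F P"
  using map_pmf_comp[of F fst "joint_pmf P K"] by (simp add: o_def)

lemma map_joint_pmf:
  "map_pmf (\<lambda>z. (g (fst z), h (snd z))) (joint_pmf P (\<lambda>a. K (g a)))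
     = joint_pmf (map_pmf g P) (\<lambda>b. map_pmf h (K b))"
  by (simp add: joint_pmf_def map_bind_pmf bind_map_pmf map_pmf_comp)

lemma joint_pmf_assoc:
  "joint_pmf (joint_pmf P K) L
     = map_pmf (\<lambda>(a, b, c). ((a, b), c)) (joint_pmf P (\<lambda>a. joint_pmf (K a) (\<lambda>b. L (a, b))))"
  by (simp add: joint_pmf_def map_bind_pmf bind_map_pmf map_pmf_comp bind_assoc_pmf)

definition cond_kernel :: "('a \<times> 'b) pmf \<Rightarrow> 'a \<Rightarrow> 'b pmf" where
  "cond_kernel Q a =
     (if a \<in> fst ` set_pmf Q then map_pmf snd (cond_pmf Q {z. fst z = a}) else return_pmf undefined)"

lemma set_pmf_cond_kernel:
  assumes "a \<in> fst ` set_pmf Q"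
  shows "set_pmf (cond_kernel Q a) = {b. (a, b) \<in> set_pmf Q}"
proof -
  have "set_pmf Q \<inter> {z. fst z = a} \<noteq> {}" using assms by auto
  then show ?thesis using assms by (force simp: cond_kernel_def)
qed

lemma finite_set_pmf_cond_kernel:
  assumes "finite (set_pmf Q)"
  shows "finite (set_pmf (cond_kernel Q a))"
proof (cases "a \<in> fst ` set_pmf Q")
  case True
  have "{b. (a, b) \<in> set_pmf Q} \<subseteq> snd ` set_pmf Q" by force
  then show ?thesis using assms finite_subset by (auto simp: set_pmf_cond_kernel[OF True])
qed (simp add: cond_kernel_def)

lemma joint_pmf_cond_kernel: "joint_pmf (map_pmf fst Q) (cond_kernel Q) = Q"
proof -
  have "map_pmf (Pair a) (cond_kernel Q a) = cond_pmf Q {z. fst z = a}"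
    if "a \<in> set_pmf (map_pmf fst Q)" for a
  proof -
    have ne: "set_pmf Q \<inter> {z. fst z = a} \<noteq> {}" using that by auto
    then show ?thesis using that
      by (auto simp: cond_kernel_def map_pmf_comp set_cond_pmf[OF ne] intro!: map_pmf_idI)
  qed
  then have "joint_pmf (map_pmf fst Q) (cond_kernel Q)
      = bind_pmf (map_pmf fst Q) (\<lambda>a. cond_pmf Q {z. a = fst z})"
    unfolding joint_pmf_def by (auto intro!: bind_pmf_cong simp: eq_commute)
  also have "\<dots> = Q"
    by (rule bind_cond_pmf_cancel) (auto simp: vimage_def eq_commute)
  finally show ?thesis .
qed

definition list_pmf :: "nat \<Rightarrow> (nat \<Rightarrow> 'a pmf) \<Rightarrow> 'a list pmf" where
  "list_pmf n p = map_pmf (\<lambda>f. map f [0..<n]) (Pi_pmf {..<n} undefined p)"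

lemma map_nth_list_pmf: "i < n \<Longrightarrow> map_pmf (\<lambda>l. l ! i) (list_pmf n p) = p i"
  unfolding list_pmf_def by (simp add: map_pmf_comp Pi_pmf_component)

lemma finite_set_list_pmf:
  assumes "\<And>i. finite (set_pmf (p i))"
  shows "finite (set_pmf (list_pmf n p))"
proof -
  have "set_pmf (list_pmf n p) \<subseteq> {l. set l \<subseteq> (\<Union>i<n. set_pmf (p i)) \<and> length l = n}"
    by (fastforce simp: list_pmf_def set_Pi_pmf PiE_dflt_def)
  then show ?thesis
    using finite_lists_length_eq[of "\<Union>i<n. set_pmf (p i)" n] assms finite_subset by auto
qed

section \<open>Markov chains\<close>

lemma prb_eq_pmf_map_pmf: "prb \<omega> (\<lambda>w. F w = x) = pmf (map_pmf F \<omega>) x"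
  by (simp add: prb_def pmf_map vimage_def)

lemma prb_map_pmf: "prb (map_pmf h \<omega>) E = prb \<omega> (\<lambda>w. E (h w))"
  by (simp add: prb_def vimage_def)

lemma markov_map_pmf:
  "markov (map_pmf h \<omega>) A B C \<longleftrightarrow> markov \<omega> (\<lambda>w. A (h w)) (\<lambda>w. B (h w)) (\<lambda>w. C (h w))"
  unfolding markov_def prb_map_pmf ..

lemma markov_iff_pmf:
  "markov \<omega> A B C \<longleftrightarrow>
     (\<forall>a b c. pmf (map_pmf (\<lambda>w. (A w, B w, C w)) \<omega>) (a, b, c) * pmf (map_pmf B \<omega>) b
            = pmf (map_pmf (\<lambda>w. (A w, B w)) \<omega>) (a, b) * pmf (map_pmf (\<lambda>w. (B w, C w)) \<omega>) (b, c))"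
  unfolding markov_def prb_eq_pmf_map_pmf[symmetric] by simp

lemma markov_iff_pmf':
  "markov \<omega> A B C \<longleftrightarrow>
     (\<forall>a b c. pmf (map_pmf (\<lambda>w. ((A w, B w), C w)) \<omega>) ((a, b), c) * pmf (map_pmf B \<omega>) b
            = pmf (map_pmf (\<lambda>w. (A w, B w)) \<omega>) (a, b) * pmf (map_pmf (\<lambda>w. (B w, C w)) \<omega>) (b, c))"
  unfolding markov_def prb_eq_pmf_map_pmf[symmetric] by simp

lemma markov_sym:
  assumes "markov \<omega> A B C"
  shows "markov \<omega> C B A"
  unfolding markov_def
proof (intro allI)
  fix a b c
  have "(\<lambda>w. C w = a \<and> B w = b \<and> A w = c) = (\<lambda>w. A w = c \<and> B w = b \<and> C w = a)"
    and "(\<lambda>w. C w = a \<and> B w = b) = (\<lambda>w. B w = b \<and> C w = a)"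
    and "(\<lambda>w. B w = b \<and> A w = c) = (\<lambda>w. A w = c \<and> B w = b)" by auto
  then show "prb \<omega> (\<lambda>w. C w = a \<and> B w = b \<and> A w = c) * prb \<omega> (\<lambda>w. B w = b) =
      prb \<omega> (\<lambda>w. C w = a \<and> B w = b) * prb \<omega> (\<lambda>w. B w = b \<and> A w = c)"
    using assms[unfolded markov_def, rule_format, of c b a] by (simp add: mult.commute)
qed

lemma markov_joint_pmf:
  "markov (joint_pmf P (\<lambda>a. K (f a))) (\<lambda>z. H (fst z)) (\<lambda>z. f (fst z)) (\<lambda>z. G (snd z))"
proof -
  let ?\<omega> = "joint_pmf P (\<lambda>a. K (f a))"
  have "map_pmf (\<lambda>z. ((H (fst z), f (fst z)), G (snd z))) ?\<omega>
      = joint_pmf (map_pmf (\<lambda>a. (H a, f a)) P) (\<lambda>hf. map_pmf G (K (snd hf)))"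
    and "map_pmf (\<lambda>z. (f (fst z), G (snd z))) ?\<omega> = joint_pmf (map_pmf f P) (\<lambda>b. map_pmf G (K b))"
    by (simp_all add: joint_pmf_def map_bind_pmf bind_map_pmf map_pmf_comp)
  moreover have "map_pmf (\<lambda>z. f (fst z)) ?\<omega> = map_pmf f P"
    and "map_pmf (\<lambda>z. (H (fst z), f (fst z))) ?\<omega> = map_pmf (\<lambda>a. (H a, f a)) P"
    using map_pmf_fst_joint_pmf[of "\<lambda>a. (H a, f a)"] by simp_all
  ultimately show ?thesis
    unfolding markov_iff_pmf' by (simp add: pmf_joint_pmf)
qed

lemma markov_law_eq:
  assumes M: "markov \<omega> A B C" and M': "markov \<omega>' A' B' C'"
    and AB: "map_pmf (\<lambda>w. (A w, B w)) \<omega> = map_pmf (\<lambda>w. (A' w, B' w)) \<omega>'"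
    and BC: "map_pmf (\<lambda>w. (B w, C w)) \<omega> = map_pmf (\<lambda>w. (B' w, C' w)) \<omega>'"
  shows "map_pmf (\<lambda>w. ((A w, B w), C w)) \<omega> = map_pmf (\<lambda>w. ((A' w, B' w), C' w)) \<omega>'"
proof (rule pmf_eqI)
  fix x :: "('b \<times> 'c) \<times> 'd"
  obtain a b c where x: "x = ((a, b), c)" by (metis prod.collapse)
  have B: "map_pmf B \<omega> = map_pmf B' \<omega>'"
    using arg_cong[OF AB, of "map_pmf snd"] by (simp add: map_pmf_comp)
  show "pmf (map_pmf (\<lambda>w. ((A w, B w), C w)) \<omega>) x = pmf (map_pmf (\<lambda>w. ((A' w, B' w), C' w)) \<omega>') x"
  proof (cases "pmf (map_pmf B \<omega>) b = 0")
    case True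
    then have "b \<notin> B ` set_pmf \<omega>" "b \<notin> B' ` set_pmf \<omega>'"
      using B by (auto simp flip: set_map_pmf simp: pmf_eq_0_set_pmf)
    then have "((a, b), c) \<notin> set_pmf (map_pmf (\<lambda>w. ((A w, B w), C w)) \<omega>)"
      "((a, b), c) \<notin> set_pmf (map_pmf (\<lambda>w. ((A' w, B' w), C' w)) \<omega>')" by auto
    then show ?thesis unfolding x by (simp only: pmf_eq_0_set_pmf[symmetric])
  next
    case False
    have "pmf (map_pmf (\<lambda>w. ((A w, B w), C w)) \<omega>) ((a, b), c) * pmf (map_pmf B \<omega>) b
       = pmf (map_pmf (\<lambda>w. ((A' w, B' w), C' w)) \<omega>') ((a, b), c) * pmf (map_pmf B \<omega>) b"
      using M M' unfolding markov_iff_pmf' AB BC B by metis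
    then show ?thesis unfolding x using False by simp
  qed
qed

lemma markov_imp_joint_pmf:
  assumes "markov \<omega> A B C"
  shows "map_pmf (\<lambda>w. ((A w, B w), C w)) \<omega>
           = joint_pmf (map_pmf (\<lambda>w. (A w, B w)) \<omega>)
               (\<lambda>ab. cond_kernel (map_pmf (\<lambda>w. (B w, C w)) \<omega>) (snd ab))"
proof -
  let ?BC = "map_pmf (\<lambda>w. (B w, C w)) \<omega>"
  let ?\<omega>' = "joint_pmf (map_pmf (\<lambda>w. (A w, B w)) \<omega>) (\<lambda>ab. cond_kernel ?BC (snd ab))"
  have "map_pmf (\<lambda>z. (snd (fst z), snd z)) ?\<omega>' = joint_pmf (map_pmf B \<omega>) (cond_kernel ?BC)"
    using map_joint_pmf[where g=snd and h="\<lambda>z. z" and K="cond_kernel ?BC" and P="map_pmf (\<lambda>w. (A w, B w)) \<omega>"]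
    by (simp add: map_pmf_comp)
  also have "\<dots> = ?BC"
    using joint_pmf_cond_kernel[of ?BC] by (simp add: map_pmf_comp)
  finally have BC: "map_pmf (\<lambda>z. (snd (fst z), snd z)) ?\<omega>' = ?BC" .
  have M': "markov ?\<omega>' (\<lambda>z. fst (fst z)) (\<lambda>z. snd (fst z)) (\<lambda>z. snd z)"
    using markov_joint_pmf[where P="map_pmf (\<lambda>w. (A w, B w)) \<omega>" and K="cond_kernel ?BC"
        and f=snd and H=fst and G="\<lambda>c. c"] by simp
  have AB: "map_pmf (\<lambda>z. (fst (fst z), snd (fst z))) ?\<omega>' = map_pmf (\<lambda>w. (A w, B w)) \<omega>"
    using map_pmf_fst_joint_pmf[of "\<lambda>ab. (fst ab, snd ab)"] by simp
  have "map_pmf (\<lambda>z. ((fst (fst z), snd (fst z)), snd z)) ?\<omega>' = map_pmf (\<lambda>w. ((A w, B w), C w)) \<omega>"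
    by (rule markov_law_eq[OF M' assms AB BC])
  then show ?thesis by simp
qed

lemma markov_map:
  assumes "markov \<omega> A B C"
  shows "markov \<omega> (\<lambda>w. f (A w)) B (\<lambda>w. g (C w))"
proof -
  let ?K = "cond_kernel (map_pmf (\<lambda>w. (B w, C w)) \<omega>)"
  have "map_pmf (\<lambda>w. ((f (A w), B w), g (C w))) \<omega>
      = map_pmf (\<lambda>z. ((f (fst (fst z)), snd (fst z)), g (snd z))) (map_pmf (\<lambda>w. ((A w, B w), C w)) \<omega>)"
    by (simp add: map_pmf_comp)
  also have "\<dots> = joint_pmf (map_pmf (\<lambda>w. (f (A w), B w)) \<omega>) (\<lambda>fb. map_pmf g (?K (snd fb)))"
    unfolding markov_imp_joint_pmf[OF assms]
    using map_joint_pmf[where g="\<lambda>ab. (f (fst ab), snd ab)" and h=g and K="\<lambda>fb. ?K (snd fb)"]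
    by (simp add: map_pmf_comp)
  finally have law: "map_pmf (\<lambda>w. ((f (A w), B w), g (C w))) \<omega> = \<dots>" .
  have "markov (map_pmf (\<lambda>w. ((f (A w), B w), g (C w))) \<omega>) (\<lambda>z. fst (fst z)) (\<lambda>z. snd (fst z)) snd"
    unfolding law
    using markov_joint_pmf[where P="map_pmf (\<lambda>w. (f (A w), B w)) \<omega>" and K="\<lambda>b. map_pmf g (?K b)"
        and f=snd and H=fst and G="\<lambda>c. c"] by simp
  then show ?thesis by (simp add: markov_map_pmf)
qed

lemma markov_law_cong:
  assumes "map_pmf (\<lambda>w. (A w, B w, C w)) \<omega> = map_pmf (\<lambda>w. (A' w, B' w, C' w)) \<omega>'"
  shows "markov \<omega> A B C \<longleftrightarrow> markov \<omega>' A' B' C'"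
proof -
  have "markov \<omega> A B C \<longleftrightarrow>
      markov (map_pmf (\<lambda>w. (A w, B w, C w)) \<omega>) fst (\<lambda>t. fst (snd t)) (\<lambda>t. snd (snd t))"
    and "markov \<omega>' A' B' C' \<longleftrightarrow>
      markov (map_pmf (\<lambda>w. (A' w, B' w, C' w)) \<omega>') fst (\<lambda>t. fst (snd t)) (\<lambda>t. snd (snd t))"
    by (simp_all add: markov_map_pmf)
  with assms show ?thesis by simp
qed

lemma expectation_markov_law_eq:
  fixes f :: "'a \<Rightarrow> 'b \<Rightarrow> 'c \<Rightarrow> real"
  assumes "markov \<omega> A B C" and "markov \<omega>' A' B' C'"
    and "map_pmf (\<lambda>w. (A w, B w)) \<omega> = map_pmf (\<lambda>w. (A' w, B' w)) \<omega>'"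
    and "map_pmf (\<lambda>w. (B w, C w)) \<omega> = map_pmf (\<lambda>w. (B' w, C' w)) \<omega>'"
  shows "measure_pmf.expectation \<omega> (\<lambda>w. f (A w) (B w) (C w))
       = measure_pmf.expectation \<omega>' (\<lambda>w. f (A' w) (B' w) (C' w))"
proof -
  have "measure_pmf.expectation \<omega> (\<lambda>w. f (A w) (B w) (C w))
      = measure_pmf.expectation (map_pmf (\<lambda>w. ((A w, B w), C w)) \<omega>) (\<lambda>((a, b), c). f a b c)"
    by simp
  also have "\<dots> = measure_pmf.expectation \<omega>' (\<lambda>w. f (A' w) (B' w) (C' w))"
    unfolding markov_law_eq[OF assms] by simp
  finally show ?thesis .
qed

text \<open>The law P of a pair (X, T) is glued to \<omega> along X, and a sample of K T is appended.\<close>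
lemma joint_pmf_glue:
  fixes \<omega> :: "'w pmf" and X :: "'w \<Rightarrow> 'x" and P :: "('x \<times> 't) pmf" and K :: "'t \<Rightarrow> 'r pmf"
  assumes X: "map_pmf X \<omega> = map_pmf fst P"
  defines "\<Omega> \<equiv> joint_pmf (joint_pmf \<omega> (\<lambda>w. cond_kernel P (X w))) (\<lambda>a. K (snd a))"
  shows "map_pmf (\<lambda>z. F (fst (fst z))) \<Omega> = map_pmf F \<omega>"
    and "map_pmf (\<lambda>z. ((X (fst (fst z)), snd (fst z)), snd z)) \<Omega> = joint_pmf P (\<lambda>t. K (snd t))"
    and "markov \<Omega> (\<lambda>z. (snd (fst z), snd z)) (\<lambda>z. X (fst (fst z))) (\<lambda>z. fst (fst z))"
    and "markov \<Omega> fst (\<lambda>z. snd (fst z)) snd"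
proof -
  let ?\<Omega>1 = "joint_pmf \<omega> (\<lambda>w. cond_kernel P (X w))"
  have "map_pmf (\<lambda>z. F (fst (fst z))) \<Omega> = map_pmf (\<lambda>a. F (fst a)) ?\<Omega>1"
    unfolding \<Omega>_def by (rule map_pmf_fst_joint_pmf)
  then show "map_pmf (\<lambda>z. F (fst (fst z))) \<Omega> = map_pmf F \<omega>" by simp
  have "map_pmf (\<lambda>a. (X (fst a), snd a)) ?\<Omega>1 = P"
    using map_joint_pmf[where g=X and h="\<lambda>t. t" and K="cond_kernel P" and P=\<omega>]
    by (simp add: X joint_pmf_cond_kernel)
  then show "map_pmf (\<lambda>z. ((X (fst (fst z)), snd (fst z)), snd z)) \<Omega> = joint_pmf P (\<lambda>t. K (snd t))"
    unfolding \<Omega>_def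
    using map_joint_pmf[where g="\<lambda>a. (X (fst a), snd a)" and h="\<lambda>r. r" and K="\<lambda>t. K (snd t)" and P="?\<Omega>1"]
    by simp
  have "markov (joint_pmf \<omega> (\<lambda>w. joint_pmf (cond_kernel P (X w)) (\<lambda>t. K t)))
      (\<lambda>z. snd z) (\<lambda>z. X (fst z)) (\<lambda>z. fst z)"
    using markov_sym[OF markov_joint_pmf[where P=\<omega> and f=X and H="\<lambda>w. w" and G="\<lambda>t. t"
        and K="\<lambda>x. joint_pmf (cond_kernel P x) K"]] by simp
  then show "markov \<Omega> (\<lambda>z. (snd (fst z), snd z)) (\<lambda>z. X (fst (fst z))) (\<lambda>z. fst (fst z))"
    unfolding \<Omega>_def joint_pmf_assoc by (simp add: markov_map_pmf case_prod_beta)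
  show "markov \<Omega> fst (\<lambda>z. snd (fst z)) snd"
    unfolding \<Omega>_def using markov_joint_pmf[where P="?\<Omega>1" and f=snd and H="\<lambda>a. a" and G="\<lambda>r. r" and K=K]
    by simp
qed

section \<open>Entropy\<close>

lemma pmf_map_pmf_pos: "w \<in> set_pmf \<omega> \<Longrightarrow> pmf (map_pmf F \<omega>) (F w) > 0"
  by (simp add: pmf_positive)

lemma integral_measure_pmf_finite:
  "finite (set_pmf \<omega>) \<Longrightarrow> measure_pmf.expectation \<omega> f = (\<Sum>w\<in>set_pmf \<omega>. f w * pmf \<omega> w)"
  by (rule integral_measure_pmf_real) auto

lemma ent_eq_expectation:
  assumes "finite (set_pmf \<omega>)"
  shows "ent \<omega> F = - measure_pmf.expectation \<omega> (\<lambda>w. log 2 (pmf (map_pmf F \<omega>) (F w)))"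
proof -
  have "measure_pmf.expectation \<omega> (\<lambda>w. log 2 (pmf (map_pmf F \<omega>) (F w)))
      = measure_pmf.expectation (map_pmf F \<omega>) (\<lambda>v. log 2 (pmf (map_pmf F \<omega>) v))"
    by simp
  also have "\<dots> = (\<Sum>v\<in>set_pmf (map_pmf F \<omega>). log 2 (pmf (map_pmf F \<omega>) v) * pmf (map_pmf F \<omega>) v)"
    using assms by (intro integral_measure_pmf_real) auto
  finally show ?thesis unfolding ent_def by (simp add: sum_negf[symmetric] mult.commute)
qed

lemma ent_map_pmf: "ent (map_pmf h \<omega>) F = ent \<omega> (\<lambda>w. F (h w))"
  by (simp add: ent_def map_pmf_comp)

lemma ent_inj:
  assumes fin: "finite (set_pmf \<omega>)" and "inj h"
  shows "ent \<omega> (\<lambda>w. h (F w)) = ent \<omega> F"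
proof -
  have "pmf (map_pmf (\<lambda>w. h (F w)) \<omega>) (h (F w)) = pmf (map_pmf F \<omega>) (F w)" for w
    using pmf_map_inj'[OF \<open>inj h\<close>, of "map_pmf F \<omega>" "F w"] by (simp add: map_pmf_comp)
  then show ?thesis
    unfolding ent_eq_expectation[OF fin] integral_measure_pmf_finite[OF fin] by simp
qed

lemma ent_markov:
  assumes fin: "finite (set_pmf \<omega>)" and M: "markov \<omega> P Q R"
  shows "ent \<omega> (\<lambda>w. (P w, Q w, R w)) + ent \<omega> Q = ent \<omega> (\<lambda>w. (P w, Q w)) + ent \<omega> (\<lambda>w. (Q w, R w))"
proof -
  let ?l = "\<lambda>F w. log 2 (pmf (map_pmf F \<omega>) (F w))"
  have "?l (\<lambda>w. (P w, Q w, R w)) w + ?l Q w = ?l (\<lambda>w. (P w, Q w)) w + ?l (\<lambda>w. (Q w, R w)) w"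
    if w: "w \<in> set_pmf \<omega>" for w
  proof -
    have "log 2 (pmf (map_pmf (\<lambda>w. (P w, Q w, R w)) \<omega>) (P w, Q w, R w) * pmf (map_pmf Q \<omega>) (Q w))
      = log 2 (pmf (map_pmf (\<lambda>w. (P w, Q w)) \<omega>) (P w, Q w) * pmf (map_pmf (\<lambda>w. (Q w, R w)) \<omega>) (Q w, R w))"
      using M unfolding markov_iff_pmf by simp
    then show ?thesis
      using pmf_map_pmf_pos[OF w, of "\<lambda>w. (P w, Q w, R w)"] pmf_map_pmf_pos[OF w, of Q]
        pmf_map_pmf_pos[OF w, of "\<lambda>w. (P w, Q w)"] pmf_map_pmf_pos[OF w, of "\<lambda>w. (Q w, R w)"]
      by (simp add: log_mult)
  qed
  then have "(\<Sum>w\<in>set_pmf \<omega>. (?l (\<lambda>w. (P w, Q w, R w)) w + ?l Q w) * pmf \<omega> w)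
      = (\<Sum>w\<in>set_pmf \<omega>. (?l (\<lambda>w. (P w, Q w)) w + ?l (\<lambda>w. (Q w, R w)) w) * pmf \<omega> w)"
    by (intro sum.cong) simp_all
  then show ?thesis
    unfolding ent_eq_expectation[OF fin] integral_measure_pmf_finite[OF fin]
    by (simp add: distrib_right sum.distrib)
qed

lemma cmi_map_pmf:
  "cmi (map_pmf h \<omega>) A B C = cmi \<omega> (\<lambda>w. A (h w)) (\<lambda>w. B (h w)) (\<lambda>w. C (h w))"
  by (simp add: cmi_def ent_map_pmf)

lemma cmi_inj:
  assumes "finite (set_pmf \<omega>)" and "inj h"
  shows "cmi \<omega> A (\<lambda>w. h (B w)) C = cmi \<omega> A B C"
proof -
  have "ent \<omega> (\<lambda>w. (h (B w), C w)) = ent \<omega> (\<lambda>w. (B w, C w))"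
    and "ent \<omega> (\<lambda>w. (A w, h (B w), C w)) = ent \<omega> (\<lambda>w. (A w, B w, C w))"
    using ent_inj[OF assms(1), of "\<lambda>(b, c). (h b, c)" "\<lambda>w. (B w, C w)"]
      ent_inj[OF assms(1), of "\<lambda>(a, b, c). (a, h b, c)" "\<lambda>w. (A w, B w, C w)"] assms(2)
    by (simp_all add: inj_def)
  then show ?thesis by (simp add: cmi_def)
qed

lemma cmi_markov_eq:
  assumes fin: "finite (set_pmf \<omega>)"
    and M: "markov \<omega> (\<lambda>w. (A w, B w)) Q R" and M': "markov \<omega> A Q R"
  shows "cmi \<omega> B (\<lambda>w. (Q w, R w)) A = cmi \<omega> B Q A"
proof -
  have perm: "ent \<omega> (\<lambda>w. \<pi> (F w)) = ent \<omega> F" if "inj \<pi>" for \<pi> :: "'x \<Rightarrow> 'y" and F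
    using ent_inj[OF fin that] .
  have "ent \<omega> (\<lambda>w. ((Q w, R w), A w)) = ent \<omega> (\<lambda>w. (A w, Q w, R w))"
    and "ent \<omega> (\<lambda>w. (Q w, A w)) = ent \<omega> (\<lambda>w. (A w, Q w))"
    and "ent \<omega> (\<lambda>w. (B w, (Q w, R w), A w)) = ent \<omega> (\<lambda>w. ((A w, B w), Q w, R w))"
    and "ent \<omega> (\<lambda>w. (B w, Q w, A w)) = ent \<omega> (\<lambda>w. ((A w, B w), Q w))"
    using perm[of "\<lambda>(a, q, r). ((q, r), a)" "\<lambda>w. (A w, Q w, R w)"]
      perm[of "\<lambda>(a, q). (q, a)" "\<lambda>w. (A w, Q w)"]
      perm[of "\<lambda>((a, b), q, r). (b, (q, r), a)" "\<lambda>w. ((A w, B w), Q w, R w)"]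
      perm[of "\<lambda>((a, b), q). (b, q, a)" "\<lambda>w. ((A w, B w), Q w)"]
    by (simp_all add: inj_def)
  then show ?thesis
    using ent_markov[OF fin M] ent_markov[OF fin M'] by (simp add: cmi_def)
qed

section \<open>From the LP bound to the restricted bound\<close>

lemma LP_feasible_mono_plusD:
  assumes "LP_feasible pX U K" and "cpl pX \<omega> X"
    and "map_pmf (\<lambda>w. (X w, V w, W w)) \<omega> = U (law \<omega> X A)"
    and "markov \<omega> A B X" and "markov \<omega> (\<lambda>w. (W w, V w)) X (\<lambda>w. (A w, B w))"
  shows "K (law \<omega> X B) + cmi \<omega> B (\<lambda>w. (V w, W w)) A \<le> K (law \<omega> X A)"
  using assms unfolding LP_feasible_def by blast

text \<open>The bounds quantify over sample spaces of type nat; \<open>to_nat\<close> carries any countable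
  sample space there without changing a single law.\<close>
lemma LP_feasible_mono_plus:
  fixes \<Omega> :: "'w::countable pmf" and X :: "'w \<Rightarrow> 'x::countable" and A B V W :: "'w \<Rightarrow> nat"
  assumes LP: "LP_feasible pX U K" and fin: "finite (set_pmf \<Omega>)" and X: "map_pmf X \<Omega> = pX"
    and U: "map_pmf (\<lambda>z. (X z, V z, W z)) \<Omega> = U (law \<Omega> X A)"
    and M: "markov \<Omega> A B X" and M': "markov \<Omega> (\<lambda>z. (W z, V z)) X (\<lambda>z. (A z, B z))"
  shows "K (law \<Omega> X B) + cmi \<Omega> B (\<lambda>z. (V z, W z)) A \<le> K (law \<Omega> X A)"
proof -
  let ?\<omega> = "map_pmf to_nat \<Omega>" and ?X = "\<lambda>n. X (from_nat n)" and ?A = "\<lambda>n. A (from_nat n)"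
    and ?B = "\<lambda>n. B (from_nat n)" and ?V = "\<lambda>n. V (from_nat n)" and ?W = "\<lambda>n. W (from_nat n)"
  have law: "law ?\<omega> ?X F = law \<Omega> X (\<lambda>z. F (to_nat z))" for F
    by (simp add: law_def map_pmf_comp)
  have "cpl pX ?\<omega> ?X" using fin X by (simp add: cpl_def map_pmf_comp)
  moreover have "map_pmf (\<lambda>n. (?X n, ?V n, ?W n)) ?\<omega> = U (law ?\<omega> ?X ?A)"
    using U by (simp add: law map_pmf_comp)
  moreover have "markov ?\<omega> ?A ?B ?X" and "markov ?\<omega> (\<lambda>n. (?W n, ?V n)) ?X (\<lambda>n. (?A n, ?B n))"
    using M M' by (simp_all add: markov_map_pmf)
  ultimately have "K (law ?\<omega> ?X ?B) + cmi ?\<omega> ?B (\<lambda>n. (?V n, ?W n)) ?A \<le> K (law ?\<omega> ?X ?A)"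
    by (rule LP_feasible_mono_plusD[OF LP])
  then show ?thesis by (simp add: law cmi_map_pmf)
qed

lemma Rrate_le_cmi:
  fixes \<Omega> :: "'w::countable pmf" and X :: "'w \<Rightarrow> 'x::countable" and A B :: "'w \<Rightarrow> nat"
    and Y :: "nat \<Rightarrow> 'w \<Rightarrow> nat" and V :: "'w \<Rightarrow> 'v::countable" and d :: "nat \<Rightarrow> nat \<Rightarrow> 'x \<Rightarrow> 'r \<Rightarrow> real"
  assumes fin: "finite (set_pmf \<Omega>)"
    and law: "map_pmf (\<lambda>z. (X z, A z, B z, ysv m Y z)) \<Omega>
            = map_pmf (\<lambda>w. (Xv w, Av w, Bv w, ysv m Yv w)) \<omega>"
    and M: "markov \<Omega> V X (\<lambda>z. (A z, B z, ysv m Y z))"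
    and dist: "\<And>i. i < m \<Longrightarrow> markov \<omega> (Yv i) Av Xv \<Longrightarrow> \<exists>g :: 'v \<Rightarrow> nat \<Rightarrow> 'r.
                 \<forall>j<nc i. measure_pmf.expectation \<Omega> (\<lambda>z. d i j (X z) (g (V z) (Y i z))) \<le> D i j + \<epsilon>"
  shows "Rrate m d nc D \<epsilon> \<omega> Xv Av Bv Yv \<le> ereal (cmi \<Omega> B V A)"
proof -
  let ?\<omega> = "map_pmf to_nat \<Omega>" and ?X = "\<lambda>n. X (from_nat n)" and ?A = "\<lambda>n. A (from_nat n)"
    and ?B = "\<lambda>n. B (from_nat n)" and ?Y = "\<lambda>i n. Y i (from_nat n)"
    and ?V = "\<lambda>n. to_nat (V (from_nat n))"
  have fin': "finite (set_pmf ?\<omega>)" using fin by simp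
  have law': "map_pmf (\<lambda>n. (?X n, ?A n, ?B n, ysv m ?Y n)) ?\<omega>
      = map_pmf (\<lambda>w. (Xv w, Av w, Bv w, ysv m Yv w)) \<omega>"
    using law by (simp add: map_pmf_comp ysv_def)
  have M': "markov ?\<omega> ?V ?X (\<lambda>n. (?A n, ?B n, ysv m ?Y n))"
    using markov_map[OF M, of to_nat "\<lambda>c. c"] by (simp add: markov_map_pmf ysv_def)
  have dist': "\<forall>i<m. markov \<omega> (Yv i) Av Xv \<longrightarrow>
      (\<exists>g :: nat \<Rightarrow> nat \<Rightarrow> 'r. dist_ok ?\<omega> ?X (\<lambda>n. g (?V n) (?Y i n)) (d i) (nc i) (D i) \<epsilon>)"
  proof (intro allI impI)
    fix i assume "i < m" "markov \<omega> (Yv i) Av Xv"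
    then obtain g :: "'v \<Rightarrow> nat \<Rightarrow> 'r" where
      "\<forall>j<nc i. measure_pmf.expectation \<Omega> (\<lambda>z. d i j (X z) (g (V z) (Y i z))) \<le> D i j + \<epsilon>"
      using dist by blast
    then have "dist_ok ?\<omega> ?X (\<lambda>n. g (from_nat (?V n)) (?Y i n)) (d i) (nc i) (D i) \<epsilon>"
      by (simp add: dist_ok_def)
    then show "\<exists>g :: nat \<Rightarrow> nat \<Rightarrow> 'r. dist_ok ?\<omega> ?X (\<lambda>n. g (?V n) (?Y i n)) (d i) (nc i) (D i) \<epsilon>"
      by (rule exI[where x="\<lambda>n. g (from_nat n)"])
  qed
  have "Rrate m d nc D \<epsilon> \<omega> Xv Av Bv Yv \<le> ereal (cmi ?\<omega> ?B ?V ?A)"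
    unfolding Rrate_def
    by (intro Inf_lower CollectI exI[of _ ?\<omega>] exI[of _ ?X] exI[of _ ?A] exI[of _ ?B] exI[of _ ?Y]
        exI[of _ ?V] conjI refl fin' law' M' dist')
  also have "cmi ?\<omega> ?B ?V ?A = cmi \<Omega> B V A"
    by (simp add: cmi_map_pmf cmi_inj[OF fin inj_to_nat])
  finally show ?thesis .
qed

lemma inC_Yg: "finite (set_pmf \<omega>0) \<Longrightarrow> inC (srcX \<omega>0 X0) (Yg \<omega>0 X0 Y0 i)"
  by (simp add: inC_def Yg_def law_def srcX_def map_pmf_comp)

lemma law_eq_Yg:
  assumes "map_pmf (\<lambda>w. (Xv w, ysv m Yv w)) \<omega> = map_pmf (\<lambda>w. (X0 w, ysv m Y0 w)) \<omega>0" and "i < m"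
  shows "law \<omega> Xv (Yv i) = Yg \<omega>0 X0 Y0 i"
  using arg_cong[OF assms(1), of "map_pmf (\<lambda>(x, l). (x, l ! i))"] assms(2)
  by (simp add: Yg_def law_def map_pmf_comp ysv_def)

lemma U_ok_marginalD:
  assumes "U_ok \<omega>0 X0 Y0 m d nc D \<epsilon> Vg U" and "inC (srcX \<omega>0 X0) Vg" and "inC (srcX \<omega>0 X0) A"
  shows "map_pmf fst (U A) = srcX \<omega>0 X0" and "finite (set_pmf (U A))"
proof -
  have V: "map_pmf (\<lambda>(x, v, u). (x, v)) (U A) = Vg" and "finite (set_pmf (U A))"
    using assms(1,3) unfolding U_ok_def by blast+
  have "map_pmf fst (U A) = map_pmf fst (map_pmf (\<lambda>(x, v, u). (x, v)) (U A))"
    by (simp add: map_pmf_comp case_prod_beta)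
  then show "map_pmf fst (U A) = srcX \<omega>0 X0" and "finite (set_pmf (U A))"
    using assms(2) \<open>finite (set_pmf (U A))\<close> unfolding V by (simp_all add: inC_def)
qed

lemma U_ok_couplingD:
  assumes UO: "U_ok \<omega>0 X0 Y0 m d nc D \<epsilon> Vg U"
    and "inC (srcX \<omega>0 X0) (law \<omega> X B)" and "inC (srcX \<omega>0 X0) (law \<omega> X A)"
    and "cpl (srcX \<omega>0 X0) \<omega> X" and "markov \<omega> X B A"
  obtains \<omega>' :: "nat pmf" and X' V' U1 U2 where "finite (set_pmf \<omega>')"
    and "map_pmf (\<lambda>w. (X' w, V' w, U1 w)) \<omega>' = U (law \<omega> X B)"
    and "map_pmf (\<lambda>w. (X' w, V' w, U2 w)) \<omega>' = U (law \<omega> X A)"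
    and "markov \<omega>' X' (\<lambda>w. (V' w, U1 w)) U2"
proof -
  have "\<exists>(\<omega>'::nat pmf) X' B' (A'::nat \<Rightarrow> nat \<Rightarrow> nat). cpl (srcX \<omega>0 X0) \<omega>' X' \<and> law \<omega>' X' B' = law \<omega> X B \<and>
      (\<forall>j<length [law \<omega> X A]. law \<omega>' X' (A' j) = [law \<omega> X A] ! j) \<and>
      markov \<omega>' X' B' (\<lambda>w. map (\<lambda>j. A' j w) [0..<length [law \<omega> X A]])"
    using assms(4) markov_map[OF assms(5), of "\<lambda>x. x" "\<lambda>a. [a]"]
    by (intro exI[of _ \<omega>] exI[of _ X] exI[of _ B] exI[of _ "\<lambda>j. A"]) simp
  then have "inC (srcX \<omega>0 X0) (law \<omega> X B) \<and> list_all (inC (srcX \<omega>0 X0)) [law \<omega> X A] \<and>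
      (\<exists>(\<omega>'::nat pmf) X' B' (A'::nat \<Rightarrow> nat \<Rightarrow> nat). cpl (srcX \<omega>0 X0) \<omega>' X' \<and> law \<omega>' X' B' = law \<omega> X B \<and>
      (\<forall>j<length [law \<omega> X A]. law \<omega>' X' (A' j) = [law \<omega> X A] ! j) \<and>
      markov \<omega>' X' B' (\<lambda>w. map (\<lambda>j. A' j w) [0..<length [law \<omega> X A]]))"
    using assms(2,3) by simp
  from UO[unfolded U_ok_def, THEN conjunct2, THEN conjunct2, THEN conjunct1, rule_format, OF this]
  obtain \<omega>' :: "nat pmf" and X' V' U1 and U2 :: "nat \<Rightarrow> nat \<Rightarrow> nat" where
    "finite (set_pmf \<omega>')" "map_pmf (\<lambda>w. (X' w, V' w, U1 w)) \<omega>' = U (law \<omega> X B)"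
    "map_pmf (\<lambda>w. (X' w, V' w, U2 0 w)) \<omega>' = U (law \<omega> X A)"
    "markov \<omega>' X' (\<lambda>w. (V' w, U1 w)) (\<lambda>w. [U2 0 w])"
    by auto
  moreover have "markov \<omega>' X' (\<lambda>w. (V' w, U1 w)) (U2 0)"
    using markov_map[OF calculation(4), of "\<lambda>x. x" hd] by simp
  ultimately show thesis using that by blast
qed

lemma U_ok_distortion:
  fixes \<Omega> :: "'w pmf" and d :: "nat \<Rightarrow> nat \<Rightarrow> 'x \<Rightarrow> 'r \<Rightarrow> real"
  assumes UO: "U_ok \<omega>0 X0 Y0 m d nc D \<epsilon> Vg U" and "i < m"
    and U: "map_pmf (\<lambda>z. (X z, V z, R z)) \<Omega> = U (Yg \<omega>0 X0 Y0 i)"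
    and Y: "map_pmf (\<lambda>z. (X z, Y z)) \<Omega> = Yg \<omega>0 X0 Y0 i"
    and M: "markov \<Omega> (\<lambda>z. (V z, R z)) X Y"
  shows "\<exists>g. \<forall>j<nc i. measure_pmf.expectation \<Omega> (\<lambda>z. d i j (X z) (g (V z) (R z) (Y z))) \<le> D i j + \<epsilon>"
proof -
  obtain g :: "nat \<Rightarrow> nat \<Rightarrow> nat \<Rightarrow> 'r" and \<omega>3 :: "nat pmf" and X3 V3 U3 Y3 where
    U3: "map_pmf (\<lambda>w. (X3 w, V3 w, U3 w)) \<omega>3 = U (Yg \<omega>0 X0 Y0 i)"
    and Y3: "law \<omega>3 X3 Y3 = Yg \<omega>0 X0 Y0 i"
    and M3: "markov \<omega>3 (\<lambda>w. (V3 w, U3 w)) X3 Y3"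
    and D3: "dist_ok \<omega>3 X3 (\<lambda>w. g (V3 w) (U3 w) (Y3 w)) (d i) (nc i) (D i) \<epsilon>"
    using UO \<open>i < m\<close> unfolding U_ok_def by blast
  have E: "measure_pmf.expectation \<Omega> (\<lambda>z. d i j (X z) (g (V z) (R z) (Y z)))
      = measure_pmf.expectation \<omega>3 (\<lambda>w. d i j (X3 w) (g (V3 w) (U3 w) (Y3 w)))" for j
  proof (rule expectation_markov_law_eq[OF M M3, where f="\<lambda>(v, r) x y. d i j x (g v r y)", simplified])
    show "map_pmf (\<lambda>z. ((V z, R z), X z)) \<Omega> = map_pmf (\<lambda>w. ((V3 w, U3 w), X3 w)) \<omega>3"
      using arg_cong[OF trans[OF U U3[symmetric]], of "map_pmf (\<lambda>(x, v, r). ((v, r), x))"]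
      by (simp add: map_pmf_comp)
    show "map_pmf (\<lambda>z. (X z, Y z)) \<Omega> = map_pmf (\<lambda>w. (X3 w, Y3 w)) \<omega>3"
      using Y Y3 by (simp add: law_def)
  qed
  show ?thesis by (intro exI[of _ g]) (use D3 E in \<open>auto simp: dist_ok_def\<close>)
qed

lemma U_ok_kernel:
  assumes UO: "U_ok \<omega>0 X0 Y0 m d nc D \<epsilon> Vg U" and fin0: "finite (set_pmf \<omega>0)"
    and CP: "cpl (srcX \<omega>0 X0) \<omega> Xv" and A: "inC (srcX \<omega>0 X0) (law \<omega> Xv Av)"
    and Y: "law \<omega> Xv Y = Yg \<omega>0 X0 Y0 i" and M: "markov \<omega> Y Av Xv"
  shows "\<exists>R. (\<forall>vu. finite (set_pmf (R vu))) \<and>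
      map_pmf (\<lambda>((x, v, u), r). (x, v, r)) (joint_pmf (U (law \<omega> Xv Av)) (\<lambda>t. R (snd t)))
        = U (Yg \<omega>0 X0 Y0 i)"
proof -
  have "inC (srcX \<omega>0 X0) (law \<omega> Xv Y)" using inC_Yg[OF fin0] Y by simp
  obtain \<omega>' :: "nat pmf" and X' V' U1 U2 where fin: "finite (set_pmf \<omega>')"
    and U1: "map_pmf (\<lambda>w. (X' w, V' w, U1 w)) \<omega>' = U (law \<omega> Xv Av)"
    and U2: "map_pmf (\<lambda>w. (X' w, V' w, U2 w)) \<omega>' = U (Yg \<omega>0 X0 Y0 i)"
    and M': "markov \<omega>' X' (\<lambda>w. (V' w, U1 w)) U2"
    by (rule U_ok_couplingD[OF UO A \<open>inC (srcX \<omega>0 X0) (law \<omega> Xv Y)\<close> CP markov_sym[OF M], unfolded Y])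
  define R where "R = cond_kernel (map_pmf (\<lambda>w. ((V' w, U1 w), U2 w)) \<omega>')"
  have J: "joint_pmf (U (law \<omega> Xv Av)) (\<lambda>t. R (snd t)) = map_pmf (\<lambda>w. ((X' w, V' w, U1 w), U2 w)) \<omega>'"
    using markov_imp_joint_pmf[OF M'] unfolding R_def U1 by simp
  have "map_pmf (\<lambda>((x, v, u), r). (x, v, r)) (joint_pmf (U (law \<omega> Xv Av)) (\<lambda>t. R (snd t)))
      = U (Yg \<omega>0 X0 Y0 i)"
    unfolding J U2[symmetric] by (simp add: map_pmf_comp)
  moreover have "finite (set_pmf (R vu))" for vu
    unfolding R_def using fin by (simp add: finite_set_pmf_cond_kernel)
  ultimately show ?thesis by blast
qed

lemma U_ok_kernels:
  assumes UO: "U_ok \<omega>0 X0 Y0 m d nc D \<epsilon> Vg U" and fin0: "finite (set_pmf \<omega>0)"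
    and CP: "cpl (srcX \<omega>0 X0) \<omega> Xv" and A: "inC (srcX \<omega>0 X0) (law \<omega> Xv Av)"
    and Y: "map_pmf (\<lambda>w. (Xv w, ysv m Yv w)) \<omega> = map_pmf (\<lambda>w. (X0 w, ysv m Y0 w)) \<omega>0"
  obtains R where "\<And>i vu. finite (set_pmf (R i vu))"
    and "\<And>i. i < m \<Longrightarrow> markov \<omega> (Yv i) Av Xv \<Longrightarrow>
           map_pmf (\<lambda>((x, v, u), r). (x, v, r)) (joint_pmf (U (law \<omega> Xv Av)) (\<lambda>t. R i (snd t)))
             = U (Yg \<omega>0 X0 Y0 i)"
proof -
  have "\<exists>R. (\<forall>vu. finite (set_pmf (R vu))) \<and> (i < m \<and> markov \<omega> (Yv i) Av Xv \<longrightarrow>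
      map_pmf (\<lambda>((x, v, u), r). (x, v, r)) (joint_pmf (U (law \<omega> Xv Av)) (\<lambda>t. R (snd t)))
        = U (Yg \<omega>0 X0 Y0 i))" for i
  proof (cases "i < m \<and> markov \<omega> (Yv i) Av Xv")
    case True
    then show ?thesis using U_ok_kernel[OF UO fin0 CP A law_eq_Yg[OF Y]] by blast
  qed (auto intro: exI[of _ "\<lambda>_. return_pmf 0"])
  then show thesis using that by metis
qed

lemma U_ok_extension:
  fixes d :: "nat \<Rightarrow> nat \<Rightarrow> 'x::countable \<Rightarrow> 'r \<Rightarrow> real"
  assumes UO: "U_ok \<omega>0 X0 Y0 m d nc D \<epsilon> Vg U" and fin0: "finite (set_pmf \<omega>0)"
    and Vg: "inC (srcX \<omega>0 X0) Vg" and CP: "cpl (srcX \<omega>0 X0) \<omega> Xv"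
    and A: "inC (srcX \<omega>0 X0) (law \<omega> Xv Av)"
    and Y: "map_pmf (\<lambda>w. (Xv w, ysv m Yv w)) \<omega> = map_pmf (\<lambda>w. (X0 w, ysv m Y0 w)) \<omega>0"
  obtains \<Omega> :: "((nat \<times> nat \<times> nat) \<times> nat list) pmf" and X' :: "_ \<Rightarrow> 'x" and A' B' :: "_ \<Rightarrow> nat"
    and Y' :: "nat \<Rightarrow> _ \<Rightarrow> nat" and V' W' :: "_ \<Rightarrow> nat" and R' :: "_ \<Rightarrow> nat list"
  where "finite (set_pmf \<Omega>)"
    and "map_pmf (\<lambda>z. (X' z, A' z, B' z, ysv m Y' z)) \<Omega> = map_pmf (\<lambda>w. (Xv w, Av w, Bv w, ysv m Yv w)) \<omega>"
    and "map_pmf (\<lambda>z. (X' z, V' z, W' z)) \<Omega> = U (law \<omega> Xv Av)"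
    and "\<And>i. i < m \<Longrightarrow> markov \<omega> (Yv i) Av Xv \<Longrightarrow>
           map_pmf (\<lambda>z. (X' z, V' z, R' z ! i)) \<Omega> = U (Yg \<omega>0 X0 Y0 i)"
    and "markov \<Omega> (\<lambda>z. (V' z, W' z, R' z)) X' (\<lambda>z. (A' z, B' z, ysv m Y' z))"
    and "markov \<Omega> (\<lambda>z. (A' z, B' z)) (\<lambda>z. (V' z, W' z)) R'"
proof -
  define UA where "UA = U (law \<omega> Xv Av)"
  have UA: "map_pmf Xv \<omega> = map_pmf fst UA" "finite (set_pmf UA)"
    using U_ok_marginalD[OF UO Vg A] CP by (simp_all add: UA_def cpl_def)
  obtain R where finR: "\<And>i vu. finite (set_pmf (R i vu))"
    and R: "\<And>i. i < m \<Longrightarrow> markov \<omega> (Yv i) Av Xv \<Longrightarrow>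
        map_pmf (\<lambda>((x, v, u), r). (x, v, r)) (joint_pmf UA (\<lambda>t. R i (snd t))) = U (Yg \<omega>0 X0 Y0 i)"
    using U_ok_kernels[OF UO fin0 CP A Y] unfolding UA_def by metis
  define \<Omega> where "\<Omega> = joint_pmf (joint_pmf \<omega> (\<lambda>w. cond_kernel UA (Xv w)))
                        (\<lambda>a. list_pmf m (\<lambda>i. R i (snd a)))"
  note glue = joint_pmf_glue[OF UA(1), where K="\<lambda>vu. list_pmf m (\<lambda>i. R i vu)", folded \<Omega>_def]
  show thesis
  proof (rule that[of \<Omega> "\<lambda>z. Xv (fst (fst z))" "\<lambda>z. Av (fst (fst z))" "\<lambda>z. Bv (fst (fst z))"
        "\<lambda>i z. Yv i (fst (fst z))" "\<lambda>z. fst (snd (fst z))" "\<lambda>z. snd (snd (fst z))" snd])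
    show "finite (set_pmf \<Omega>)"
      using CP UA(2) finR
      by (simp add: \<Omega>_def cpl_def finite_set_pmf_joint_pmf finite_set_pmf_cond_kernel finite_set_list_pmf)
    show "map_pmf (\<lambda>z. (Xv (fst (fst z)), Av (fst (fst z)), Bv (fst (fst z)), ysv m (\<lambda>i z. Yv i (fst (fst z))) z)) \<Omega>
        = map_pmf (\<lambda>w. (Xv w, Av w, Bv w, ysv m Yv w)) \<omega>"
      using glue(1)[of "\<lambda>w. (Xv w, Av w, Bv w, ysv m Yv w)"] by (simp add: ysv_def)
    show "map_pmf (\<lambda>z. (Xv (fst (fst z)), fst (snd (fst z)), snd (snd (fst z)))) \<Omega> = U (law \<omega> Xv Av)"
      using arg_cong[OF glue(2), of "map_pmf fst"] by (simp add: UA_def map_pmf_comp)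
    show "markov \<Omega> (\<lambda>z. (fst (snd (fst z)), snd (snd (fst z)), snd z)) (\<lambda>z. Xv (fst (fst z)))
        (\<lambda>z. (Av (fst (fst z)), Bv (fst (fst z)), ysv m (\<lambda>i z. Yv i (fst (fst z))) z))"
      using markov_map[OF glue(3), of "\<lambda>(vu, r). (fst vu, snd vu, r)" "\<lambda>w. (Av w, Bv w, ysv m Yv w)"]
      by (simp add: ysv_def case_prod_unfold)
    show "markov \<Omega> (\<lambda>z. (Av (fst (fst z)), Bv (fst (fst z)))) (\<lambda>z. (fst (snd (fst z)), snd (snd (fst z)))) snd"
      using markov_map[OF glue(4), of "\<lambda>a. (Av (fst a), Bv (fst a))" "\<lambda>r. r"] by simp
    fix i assume i: "i < m" "markov \<omega> (Yv i) Av Xv"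
    let ?J = "joint_pmf UA (\<lambda>t. list_pmf m (\<lambda>i. R i (snd t)))"
    have "map_pmf (\<lambda>z. (Xv (fst (fst z)), fst (snd (fst z)), snd z ! i)) \<Omega>
        = map_pmf (\<lambda>((x, v, u), r). (x, v, r)) (map_pmf (\<lambda>z. (fst z, snd z ! i)) ?J)"
      using arg_cong[OF glue(2), of "map_pmf (\<lambda>((x, v, u), l). (x, v, l ! i))"]
      by (simp add: map_pmf_comp case_prod_unfold)
    also have "map_pmf (\<lambda>z. (fst z, snd z ! i)) ?J = joint_pmf UA (\<lambda>t. R i (snd t))"
      using map_joint_pmf[where g="\<lambda>t. t" and h="\<lambda>l. l ! i" and K="\<lambda>t. list_pmf m (\<lambda>i. R i (snd t))" and P=UA]
      by (simp add: map_nth_list_pmf[OF i(1)])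
    finally show "map_pmf (\<lambda>z. (Xv (fst (fst z)), fst (snd (fst z)), snd z ! i)) \<Omega> = U (Yg \<omega>0 X0 Y0 i)"
      using R[OF i] by simp
  qed
qed

lemma LP_feasible_mono_plus_Rrate:
  fixes d :: "nat \<Rightarrow> nat \<Rightarrow> 'x::countable \<Rightarrow> 'r \<Rightarrow> real"
  assumes fin0: "finite (set_pmf \<omega>0)" and UO: "U_ok \<omega>0 X0 Y0 m d nc D \<epsilon> Vg U"
    and Vg: "inC (srcX \<omega>0 X0) Vg" and LP: "LP_feasible (srcX \<omega>0 X0) U K"
    and CP: "cpl (srcX \<omega>0 X0) \<omega> Xv" and A: "inC (srcX \<omega>0 X0) (law \<omega> Xv Av)"
    and Y: "map_pmf (\<lambda>w. (Xv w, ysv m Yv w)) \<omega> = map_pmf (\<lambda>w. (X0 w, ysv m Y0 w)) \<omega>0"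
    and M: "markov \<omega> Av Bv Xv"
  shows "ereal (K (law \<omega> Xv Bv)) + Rrate m d nc D \<epsilon> \<omega> Xv Av Bv Yv \<le> ereal (K (law \<omega> Xv Av))"
proof -
  obtain \<Omega> :: "((nat \<times> nat \<times> nat) \<times> nat list) pmf" and X' A' B' Y' V' W' R'
    where fin: "finite (set_pmf \<Omega>)"
    and law: "map_pmf (\<lambda>z. (X' z, A' z, B' z, ysv m Y' z)) \<Omega> = map_pmf (\<lambda>w. (Xv w, Av w, Bv w, ysv m Yv w)) \<omega>"
    and UA: "map_pmf (\<lambda>z. (X' z, V' z, W' z)) \<Omega> = U (law \<omega> Xv Av)"
    and UY: "\<And>i. i < m \<Longrightarrow> markov \<omega> (Yv i) Av Xv \<Longrightarrow>
               map_pmf (\<lambda>z. (X' z, V' z, R' z ! i)) \<Omega> = U (Yg \<omega>0 X0 Y0 i)"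
    and MX: "markov \<Omega> (\<lambda>z. (V' z, W' z, R' z)) X' (\<lambda>z. (A' z, B' z, ysv m Y' z))"
    and MR: "markov \<Omega> (\<lambda>z. (A' z, B' z)) (\<lambda>z. (V' z, W' z)) R'"
    using U_ok_extension[OF UO fin0 Vg CP A Y, where Bv=Bv] by blast
  have marg: "map_pmf (\<lambda>z. F (X' z, A' z, B' z, ysv m Y' z)) \<Omega> = map_pmf (\<lambda>w. F (Xv w, Av w, Bv w, ysv m Yv w)) \<omega>"
    for F :: "'x \<times> nat \<times> nat \<times> nat list \<Rightarrow> 'b"
    using arg_cong[OF law, of "map_pmf F"] by (simp add: map_pmf_comp)
  have law_A: "law \<Omega> X' A' = law \<omega> Xv Av" and law_B: "law \<Omega> X' B' = law \<omega> Xv Bv"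
    using marg[of "\<lambda>(x, a, b, l). (x, a)"] marg[of "\<lambda>(x, a, b, l). (x, b)"] by (simp_all add: law_def)
  have LPc: "K (law \<Omega> X' B') + cmi \<Omega> B' (\<lambda>z. (V' z, W' z)) A' \<le> K (law \<Omega> X' A')"
  proof (rule LP_feasible_mono_plus[OF LP fin])
    show "map_pmf X' \<Omega> = srcX \<omega>0 X0" using marg[of fst] CP by (simp add: cpl_def)
    show "map_pmf (\<lambda>z. (X' z, V' z, W' z)) \<Omega> = U (law \<Omega> X' A')" using UA law_A by simp
    have "map_pmf (\<lambda>z. (A' z, B' z, X' z)) \<Omega> = map_pmf (\<lambda>w. (Av w, Bv w, Xv w)) \<omega>"
      using marg[of "\<lambda>(x, a, b, l). (a, b, x)"] by simp
    with M show "markov \<Omega> A' B' X'" using markov_law_cong by blast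
    show "markov \<Omega> (\<lambda>z. (W' z, V' z)) X' (\<lambda>z. (A' z, B' z))"
      using markov_map[OF MX, of "\<lambda>(v, w, r). (w, v)" "\<lambda>(a, b, l). (a, b)"] by simp
  qed
  have cmi_eq: "cmi \<Omega> B' (\<lambda>z. ((V' z, W' z), R' z)) A' = cmi \<Omega> B' (\<lambda>z. (V' z, W' z)) A'"
    using cmi_markov_eq[OF fin MR markov_map[OF MR, of fst "\<lambda>r. r", simplified]] by simp
  have Rrate: "Rrate m d nc D \<epsilon> \<omega> Xv Av Bv Yv \<le> ereal (cmi \<Omega> B' (\<lambda>z. ((V' z, W' z), R' z)) A')"
  proof (rule Rrate_le_cmi[OF fin law])
    show "markov \<Omega> (\<lambda>z. ((V' z, W' z), R' z)) X' (\<lambda>z. (A' z, B' z, ysv m Y' z))"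
      using markov_map[OF MX, of "\<lambda>(v, w, r). ((v, w), r)" "\<lambda>t. t"] by simp
    fix i assume i: "i < m" "markov \<omega> (Yv i) Av Xv"
    have "\<exists>g. \<forall>j<nc i. measure_pmf.expectation \<Omega> (\<lambda>z. d i j (X' z) (g (V' z) (R' z ! i) (Y' i z)))
        \<le> D i j + \<epsilon>"
    proof (rule U_ok_distortion[OF UO i(1) UY[OF i]])
      show "map_pmf (\<lambda>z. (X' z, Y' i z)) \<Omega> = Yg \<omega>0 X0 Y0 i"
        using marg[of "\<lambda>(x, a, b, l). (x, l ! i)"] law_eq_Yg[OF Y i(1)] i(1) by (simp add: law_def ysv_def)
      show "markov \<Omega> (\<lambda>z. (V' z, R' z ! i)) X' (Y' i)"
        using markov_map[OF MX, of "\<lambda>(v, w, r). (v, r ! i)" "\<lambda>(a, b, l). l ! i"] i(1) by (simp add: ysv_def)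
    qed
    then obtain g where "\<forall>j<nc i. measure_pmf.expectation \<Omega> (\<lambda>z. d i j (X' z) (g (V' z) (R' z ! i) (Y' i z)))
        \<le> D i j + \<epsilon>" ..
    then show "\<exists>g. \<forall>j<nc i. measure_pmf.expectation \<Omega> (\<lambda>z. d i j (X' z) (g ((V' z, W' z), R' z) (Y' i z)))
        \<le> D i j + \<epsilon>"
      by (intro exI[of _ "\<lambda>((v, w), r). g v (r ! i)"]) simp
  qed
  have "ereal (K (law \<omega> Xv Bv)) + Rrate m d nc D \<epsilon> \<omega> Xv Av Bv Yv
      \<le> ereal (K (law \<omega> Xv Bv)) + ereal (cmi \<Omega> B' (\<lambda>z. ((V' z, W' z), R' z)) A')"
    by (rule add_left_mono[OF Rrate])
  also have "\<dots> \<le> ereal (K (law \<omega> Xv Av))"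
    using LPc cmi_eq law_A law_B by simp
  finally show ?thesis .
qed

lemma LP_feasible_imp_Rp_feasible:
  assumes fin0: "finite (set_pmf \<omega>0)" and S: "\<forall>A\<in>S. inC (srcX \<omega>0 X0) A"
    and UO: "U_ok \<omega>0 X0 Y0 m d nc D \<epsilon> Vg U" and Vg: "inC (srcX \<omega>0 X0) Vg"
    and LP: "LP_feasible (srcX \<omega>0 X0) U K"
  shows "Rp_feasible \<omega>0 X0 Y0 m d nc D \<epsilon> S K"
proof -
  have "ereal (K (law \<omega> Xv Bv)) + Rrate m d nc D \<epsilon> \<omega> Xv Av Bv Yv \<le> ereal (K (law \<omega> Xv Av))"
    if "cpl (srcX \<omega>0 X0) \<omega> Xv" "law \<omega> Xv Av \<in> S"
      "map_pmf (\<lambda>w. (Xv w, ysv m Yv w)) \<omega> = map_pmf (\<lambda>w. (X0 w, ysv m Y0 w)) \<omega>0"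
      "markov \<omega> Av Bv Xv" for \<omega> Xv Av Bv Yv
    using S that(2) by (intro LP_feasible_mono_plus_Rrate[OF fin0 UO Vg LP that(1) _ that(3,4)]) blast
  then show ?thesis
    unfolding Rp_feasible_def Let_def
  proof (intro conjI)
    show "\<forall>P\<in>S. \<forall>Q\<in>S. det_gsi (srcX \<omega>0 X0) P \<and> det_gsi (srcX \<omega>0 X0) Q \<longrightarrow> K P = K Q"
      using LP S unfolding LP_feasible_def by auto
    show "X_gsi (srcX \<omega>0 X0) \<in> S \<longrightarrow> K (X_gsi (srcX \<omega>0 X0)) = 0"
      using LP unfolding LP_feasible_def by auto
    show "\<forall>A\<in>S. 0 \<le> K A" using LP S unfolding LP_feasible_def by auto
  qed (use LP in \<open>auto simp: LP_feasible_def\<close>)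
qed

theorem theorem4:
  fixes \<omega>0 :: "nat pmf" and X0 :: "nat \<Rightarrow> 'x::countable" and Y0 :: "nat \<Rightarrow> nat \<Rightarrow> nat"
    and m :: nat and d :: "nat \<Rightarrow> nat \<Rightarrow> 'x \<Rightarrow> 'r \<Rightarrow> real" and nc :: "nat \<Rightarrow> nat"
    and D :: "nat \<Rightarrow> nat \<Rightarrow> real" and S :: "'x gsi set" and \<epsilon> :: real
  assumes "finite (set_pmf \<omega>0)"
    and "finite S"
    and "\<forall>A\<in>S. inC (srcX \<omega>0 X0) A"
    and "empty_gsi (srcX \<omega>0 X0) \<in> S"
    and "\<epsilon> > 0"
  shows "R_lb \<omega>0 X0 Y0 m d nc D \<epsilon> \<ge> Rp_lb \<omega>0 X0 Y0 m d nc D \<epsilon> S"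
proof -
  have bound: "Rp_lb \<omega>0 X0 Y0 m d nc D \<epsilon> S \<le> ereal (K (empty_gsi (srcX \<omega>0 X0)) - \<epsilon>)"
    if "U_ok \<omega>0 X0 Y0 m d nc D \<epsilon> Vg U" "inC (srcX \<omega>0 X0) Vg" "LP_feasible (srcX \<omega>0 X0) U K"
    for Vg U K
    unfolding Rp_lb_def
    by (rule Inf_lower) (use LP_feasible_imp_Rp_feasible[OF assms(1,3) that] in blast)
  then show ?thesis
    unfolding R_lb_def R_LP_def by (auto intro!: Inf_greatest)
qed

end
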